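(* Let $p$ be an odd prime, let $n=s=m=2$, and let $a,b,c,d,e,f\in\mathbb{Z}_p\setminus\{0\}$ be such that each of the pairs $(a,b)$, $(c,d)$, $(e,f)$ satisfies the quadratic reciprocity law. Put $k_s=k(a,b)$, $k_n=k(c,d)$, $k_m=k(e,f)$. Then $T_{RN}$ is invertible over $\mathbb{Z}_p$ if and only if, for some labelling $\{k_1,k_2,k_3\}=\{k_n,k_s,k_m\}$ (as a multiset), one of the following holds: (i) $k_1\equiv k_2\equiv k_3\pmod p$ and $p\ne3$; (ii) $k_1\equiv k_2\not\equiv k_3\pmod p$ and $k_3\not\equiv\pm2k_1\pmod p$; (iii) $k_1,k_2,k_3$ are pairwise distinct modulo $p$ and $k_3\not\equiv\pm(k_1+k_2)$ and $k_3\not\equiv\pm(k_1-k_2)\pmod p$.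
   Context: $\mathbb{Z}_p=\{0,1,\dots,p-1\}$ is the field with $p$ elements. For $k\ge1$ and $t_1,t_2\in\mathbb{Z}_p$, $S_k(t_1,t_2)$ is the $k\times k$ tridiagonal matrix with zeros on the main diagonal, every subdiagonal entry (positions $(i+1,i)$) equal to $t_1$, and every superdiagonal entry (positions $(i,i+1)$) equal to $t_2$. $I_r$ is the $r\times r$ identity and $\otimes$ the Kronecker product. $M_s=I_s\otimes S_n(c,d)+S_s(a,b)\otimes I_n$ and $T_{RN}=I_m\otimes M_s+S_m(f,e)\otimes I_{ns}$, with entries in $\mathbb{Z}_p$. A pair $(t_1,t_2)\in\mathbb{Z}_p\times\mathbb{Z}_p$ satisfies the quadratic reciprocity law if either $t_1=t_2$, or $t_1t_2\equiv t^2\pmod p$ for some $t\in\mathbb{Z}_p$ (for nonzero $t_1,t_2$: both are quadratic residues or both are non-residues). For such a pair, $k(t_1,t_2)=t_1$ if $t_1=t_2$, and otherwise $k(t_1,t_2)=\min\{t\in\{0,\dots,p-1\}: t^2\equiv t_1t_2\pmod p\}$. *)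

theory Defs
  imports "Jordan_Normal_Form.Matrix" "Berlekamp_Zassenhaus.Finite_Field" "HOL-Library.Multiset"
begin

definition tridiag :: "nat \<Rightarrow> 'a::zero \<Rightarrow> 'a \<Rightarrow> 'a mat" where
  "tridiag k t1 t2 = mat k k (\<lambda>(i,j). if i = j + 1 then t1 else if j = i + 1 then t2 else 0)"

definition kron :: "'a::times mat \<Rightarrow> 'a mat \<Rightarrow> 'a mat" where
  "kron A B = mat (dim_row A * dim_row B) (dim_col A * dim_col B)
     (\<lambda>(i,j). A $$ (i div dim_row B, j div dim_col B) * B $$ (i mod dim_row B, j mod dim_col B))"

definition M_s :: "nat \<Rightarrow> nat \<Rightarrow> 'a::comm_ring_1 \<Rightarrow> 'a \<Rightarrow> 'a \<Rightarrow> 'a \<Rightarrow> 'a mat" where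
  "M_s n s a b c d = kron (1\<^sub>m s) (tridiag n c d) + kron (tridiag s a b) (1\<^sub>m n)"

definition T_RN :: "nat \<Rightarrow> nat \<Rightarrow> nat \<Rightarrow> 'a::comm_ring_1 \<Rightarrow> 'a \<Rightarrow> 'a \<Rightarrow> 'a \<Rightarrow> 'a \<Rightarrow> 'a \<Rightarrow> 'a mat" where
  "T_RN n s m a b c d e f = kron (1\<^sub>m m) (M_s n s a b c d) + kron (tridiag m f e) (1\<^sub>m (n * s))"

definition qrl :: "'p::prime_card mod_ring \<Rightarrow> 'p mod_ring \<Rightarrow> bool" where
  "qrl t1 t2 \<longleftrightarrow> t1 = t2 \<or> (\<exists>t. t1 * t2 = t ^ 2)"

definition kval :: "'p::prime_card mod_ring \<Rightarrow> 'p mod_ring \<Rightarrow> nat" where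
  "kval t1 t2 = (if t1 = t2 then nat (to_int_mod_ring t1)
     else (LEAST t::nat. t < CARD('p) \<and> (of_nat t :: 'p mod_ring) ^ 2 = t1 * t2))"

end

theory Submission
  imports Defs "Jordan_Normal_Form.Determinant"
begin

text \<open>
  Write \<open>T = X + Y + Z\<close> with \<open>X = I \<otimes> I \<otimes> S(c,d)\<close>, \<open>Y = I \<otimes> S(a,b) \<otimes> I\<close> and
  \<open>Z = S(f,e) \<otimes> I \<otimes> I\<close>. These commute, and for \<open>k = 2\<close> we have \<open>X\<^sup>2 = cd\<close>, \<open>Y\<^sup>2 = ab\<close>,
  \<open>Z\<^sup>2 = ef\<close> as scalars. Hence the product of \<open>T\<close> with its sign conjugates
  \<open>X + Y - Z\<close>, \<open>X - Y + Z\<close>, \<open>X - Y - Z\<close> is the scalar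
  \<open>((X+Y)\<^sup>2 - Z\<^sup>2)((X-Y)\<^sup>2 - Z\<^sup>2) = (cd + ab - ef)\<^sup>2 - 4abcd\<close>, a symmetric quadratic form in
  \<open>cd, ab, ef\<close> familiar from Heron's formula. For odd \<open>p\<close> the conjugate product is nonzero, so
  \<open>T\<close> is invertible iff that form is. With \<open>cd = k\<^sub>n\<^sup>2\<close>, \<open>ab = k\<^sub>s\<^sup>2\<close>, \<open>ef = k\<^sub>m\<^sup>2\<close> it factors into
  the four linear forms \<open>k\<^sub>n \<plusminus> k\<^sub>s \<plusminus> k\<^sub>m\<close>, and conditions (i)--(iii) enumerate, up to
  relabelling, exactly the cases in which none of them vanishes.
\<close>

lemma invertible_mat_iff_mult_eq_smult_one:
  fixes A B :: "'a::field mat"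
  assumes A: "A \<in> carrier_mat n n" and B: "B \<in> carrier_mat n n"
    and AB: "A * B = q \<cdot>\<^sub>m 1\<^sub>m n" and B_nz: "B \<noteq> 0\<^sub>m n n"
  shows "invertible_mat A \<longleftrightarrow> q \<noteq> 0"
proof
  assume "invertible_mat A"
  then obtain A' where A'A: "A' * A = 1\<^sub>m n" and A': "A' \<in> carrier_mat n n"
    using A unfolding invertible_mat_def inverts_mat_def
    by (metis carrier_matD carrier_matI index_mult_mat(2,3) index_one_mat(2,3))
  show "q \<noteq> 0"
  proof
    assume "q = 0"
    have "B = (A' * A) * B" using A'A B by simp
    also have "\<dots> = A' * (A * B)" using A' A B by (rule assoc_mult_mat)
    also have "\<dots> = 0\<^sub>m n n" using A' unfolding AB \<open>q = 0\<close> by auto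
    finally show False using B_nz by contradiction
  qed
next
  assume "q \<noteq> 0"
  define A' where "A' = (1 / q) \<cdot>\<^sub>m B"
  have A': "A' \<in> carrier_mat n n" unfolding A'_def using B by simp
  have AA': "A * A' = 1\<^sub>m n"
    unfolding A'_def mult_smult_distrib[OF A B] AB using \<open>q \<noteq> 0\<close> by auto
  have "A' * A = 1\<^sub>m n" using A A' AA' by (rule mat_mult_left_right_inverse)
  then show "invertible_mat A"
    using A A' AA' unfolding invertible_mat_def inverts_mat_def by auto
qed

definition heron_form :: "'a::comm_ring_1 \<Rightarrow> 'a \<Rightarrow> 'a \<Rightarrow> 'a" where
  "heron_form u v w = u^2 + v^2 + w^2 - 2*u*v - 2*v*w - 2*w*u"

lemma heron_form_commute: "heron_form u v w = heron_form v u w" "heron_form u v w = heron_form u w v"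
  unfolding heron_form_def by (simp_all add: algebra_simps)

lemma heron_form_squares:
  "heron_form (x^2) (y^2) (z^2) = (x + y + z) * (x + y - z) * (x - y + z) * (x - y - z)"
  unfolding heron_form_def by (simp add: algebra_simps power2_eq_square power4_eq_xxxx)

lemma heron_form_squares_eq_0_iff:
  fixes x y z :: "'a::field"
  shows "heron_form (x^2) (y^2) (z^2) = 0 \<longleftrightarrow> z = x + y \<or> z = - (x + y) \<or> z = x - y \<or> z = - (x - y)"
proof -
  have "x + y + z = 0 \<longleftrightarrow> z = - (x + y)" "x - y + z = 0 \<longleftrightarrow> z = - (x - y)"
    by (metis add.commute eq_neg_iff_add_eq_0)+
  moreover have "x + y - z = 0 \<longleftrightarrow> z = x + y" "x - y - z = 0 \<longleftrightarrow> z = x - y"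
    by auto
  ultimately show ?thesis unfolding heron_form_squares by auto
qed

definition admissible_triple :: "'a::comm_ring_1 \<Rightarrow> 'a \<Rightarrow> 'a \<Rightarrow> bool" where
  "admissible_triple k1 k2 k3 \<longleftrightarrow>
     (k1 = k2 \<and> k2 = k3 \<and> (3::'a) \<noteq> 0) \<or>
     (k1 = k2 \<and> k2 \<noteq> k3 \<and> k3 \<noteq> 2 * k1 \<and> k3 \<noteq> - (2 * k1)) \<or>
     (k1 \<noteq> k2 \<and> k1 \<noteq> k3 \<and> k2 \<noteq> k3 \<and>
      k3 \<noteq> k1 + k2 \<and> k3 \<noteq> - (k1 + k2) \<and> k3 \<noteq> k1 - k2 \<and> k3 \<noteq> - (k1 - k2))"

lemma admissible_triple_imp_heron_form_ne_0:
  fixes x y z :: "'a::field"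
  assumes "z \<noteq> 0" "admissible_triple x y z"
  shows "heron_form (x^2) (y^2) (z^2) \<noteq> 0"
proof -
  consider "x = y" "y = z" "(3::'a) \<noteq> 0" | "x = y" "z \<noteq> 2 * x" "z \<noteq> - (2 * x)"
    | "z \<noteq> x + y" "z \<noteq> - (x + y)" "z \<noteq> x - y" "z \<noteq> - (x - y)"
    using assms(2) unfolding admissible_triple_def by blast
  then show ?thesis
  proof cases
    case 1
    have "heron_form (z^2) (z^2) (z^2) = - (3 * z^4)"
      unfolding heron_form_squares by (simp add: algebra_simps power4_eq_xxxx)
    with 1 show ?thesis using assms(1) by simp
  next
    case 2
    then show ?thesis using assms(1) unfolding heron_form_squares_eq_0_iff by simp
  qed (simp add: heron_form_squares_eq_0_iff)
qed

lemma heron_form_ne_0_imp_admissible_triple: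
  fixes x y z :: "'a::field"
  assumes "heron_form (x^2) (y^2) (z^2) \<noteq> 0"
  shows "admissible_triple x y z \<or> admissible_triple x z y \<or> admissible_triple y z x"
proof -
  have h: "z \<noteq> x + y" "z \<noteq> - (x + y)" "z \<noteq> x - y" "z \<noteq> - (x - y)"
    using assms unfolding heron_form_squares_eq_0_iff by auto
  consider "x = y" "y = z" | "x = y" "y \<noteq> z" | "x = z" "x \<noteq> y" | "y = z" "x \<noteq> y"
    | "x \<noteq> y" "x \<noteq> z" "y \<noteq> z" by blast
  then show ?thesis
  proof cases
    case 1
    have "heron_form (z^2) (z^2) (z^2) = - (3 * z^4)"
      unfolding heron_form_squares by (simp add: algebra_simps power4_eq_xxxx)
    then have "(3::'a) \<noteq> 0" using 1 assms by auto
    then show ?thesis using 1 unfolding admissible_triple_def by simp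
  next
    case 2
    then show ?thesis using h unfolding admissible_triple_def by simp
  next
    case 3
    then have "y \<noteq> 2 * x" "y \<noteq> - (2 * x)" using h(2,4) by (auto simp: algebra_simps)
    then show ?thesis using 3 unfolding admissible_triple_def by simp
  next
    case 4
    then have "x \<noteq> 2 * y" "x \<noteq> - (2 * y)" using h(2,3) by (auto simp: algebra_simps)
    then show ?thesis using 4 unfolding admissible_triple_def by simp
  next
    case 5
    then show ?thesis using h unfolding admissible_triple_def by simp
  qed
qed

lemma heron_form_squares_ne_0_iff:
  fixes x y z :: "'a::field"
  assumes "x \<noteq> 0" "y \<noteq> 0" "z \<noteq> 0"
  shows "heron_form (x^2) (y^2) (z^2) \<noteq> 0 \<longleftrightarrow>
    admissible_triple x y z \<or> admissible_triple x z y \<or> admissible_triple y x z \<or>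
    admissible_triple y z x \<or> admissible_triple z x y \<or> admissible_triple z y x"
proof
  assume "heron_form (x^2) (y^2) (z^2) \<noteq> 0"
  then show "admissible_triple x y z \<or> admissible_triple x z y \<or> admissible_triple y x z \<or>
    admissible_triple y z x \<or> admissible_triple z x y \<or> admissible_triple z y x"
    using heron_form_ne_0_imp_admissible_triple by blast
next
  assume "admissible_triple x y z \<or> admissible_triple x z y \<or> admissible_triple y x z \<or>
    admissible_triple y z x \<or> admissible_triple z x y \<or> admissible_triple z y x"
  then show "heron_form (x^2) (y^2) (z^2) \<noteq> 0"
    using admissible_triple_imp_heron_form_ne_0 assms heron_form_commute by metis
qed

lemma less_8_cases: "(i::nat) < 8 \<longleftrightarrow> i = 0 \<or> i = 1 \<or> i = 2 \<or> i = 3 \<or> i = 4 \<or> i = 5 \<or> i = 6 \<or> i = 7"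
  by auto

lemma T_RN_2_2_2:
  "T_RN 2 2 2 a b c d e f = mat_of_rows_list 8
     [[0, d, b, 0, e, 0, 0, 0],
      [c, 0, 0, b, 0, e, 0, 0],
      [a, 0, 0, d, 0, 0, e, 0],
      [0, a, c, 0, 0, 0, 0, e],
      [f, 0, 0, 0, 0, d, b, 0],
      [0, f, 0, 0, c, 0, 0, b],
      [0, 0, f, 0, a, 0, 0, d],
      [0, 0, 0, f, 0, a, c, 0]]"
  (is "_ = ?T")
proof (rule eq_matI)
  fix i j assume "i < dim_row ?T" "j < dim_col ?T"
  then have "i < 8" "j < 8" by (simp_all add: mat_of_rows_list_def)
  then show "T_RN 2 2 2 a b c d e f $$ (i, j) = ?T $$ (i, j)"
    unfolding less_8_cases
    by (elim disjE; simp add: T_RN_def M_s_def kron_def tridiag_def mat_of_rows_list_def)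
qed (simp_all add: T_RN_def M_s_def kron_def tridiag_def mat_of_rows_list_def)

lemma sum_atLeast0LessThan_8: "(\<Sum>i\<in>{0..<8::nat}. g i) = g 0 + g 1 + g 2 + g 3 + g 4 + g 5 + g 6 + g 7"
  by (simp add: numeral_eq_Suc atLeast0LessThan lessThan_Suc ac_simps)

lemma T_RN_2_2_2_carrier: "T_RN 2 2 2 a b c d e f \<in> carrier_mat 8 8"
  unfolding T_RN_2_2_2 by (rule carrier_matI) (simp_all add: mat_of_rows_list_def)

lemma T_RN_2_2_2_mult_conjugates:
  "T_RN 2 2 2 a b c d e f * (T_RN 2 2 2 a b c d (-e) (-f) *
     (T_RN 2 2 2 (-a) (-b) c d e f * T_RN 2 2 2 (-a) (-b) c d (-e) (-f)))
   = heron_form (c*d) (a*b) (e*f) \<cdot>\<^sub>m 1\<^sub>m 8" (is "?P = ?Q")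
proof (rule eq_matI)
  fix i j assume "i < dim_row ?Q" "j < dim_col ?Q"
  then have "i < 8" "j < 8" by simp_all
  then show "?P $$ (i, j) = ?Q $$ (i, j)"
    unfolding less_8_cases T_RN_2_2_2
    by (elim disjE; simp add: scalar_prod_def sum_atLeast0LessThan_8 mat_of_rows_list_def heron_form_def;
        simp add: algebra_simps power2_eq_square)
qed (simp_all add: T_RN_2_2_2 mat_of_rows_list_def)

lemma T_RN_2_2_2_conjugates_entry:
  "(T_RN 2 2 2 a b c d (-e) (-f) *
     (T_RN 2 2 2 (-a) (-b) c d e f * T_RN 2 2 2 (-a) (-b) c d (-e) (-f))) $$ (0, 7) = 2 * b * d * e"
  unfolding T_RN_2_2_2
  by (simp add: scalar_prod_def sum_atLeast0LessThan_8 mat_of_rows_list_def; simp add: algebra_simps)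

lemma T_RN_2_2_2_invertible_iff:
  fixes a b c d e f :: "'a::field"
  assumes "2 \<noteq> (0::'a)" "b \<noteq> 0" "d \<noteq> 0" "e \<noteq> 0"
  shows "invertible_mat (T_RN 2 2 2 a b c d e f) \<longleftrightarrow> heron_form (c*d) (a*b) (e*f) \<noteq> 0"
proof -
  let ?C = "T_RN 2 2 2 a b c d (-e) (-f) *
     (T_RN 2 2 2 (-a) (-b) c d e f * T_RN 2 2 2 (-a) (-b) c d (-e) (-f))"
  have C: "?C \<in> carrier_mat 8 8"
    by (rule mult_carrier_mat T_RN_2_2_2_carrier)+
  have "?C $$ (0, 7) \<noteq> 0" \<comment> \<open>the only place where \<open>2 \<noteq> 0\<close> is needed\<close>
    unfolding T_RN_2_2_2_conjugates_entry using assms by simp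
  then have "?C \<noteq> 0\<^sub>m 8 8" by auto
  with C show ?thesis
    by (intro invertible_mat_iff_mult_eq_smult_one[OF T_RN_2_2_2_carrier _ T_RN_2_2_2_mult_conjugates])
qed

lemma of_nat_mod_ring_eq_0_iff_prime:
  assumes "prime q"
  shows "(of_nat q :: 'p::prime_card mod_ring) = 0 \<longleftrightarrow> CARD('p) = q"
  using assms prime_card[where 'a='p] by (auto simp: of_nat_eq_0_iff_char_dvd primes_dvd_imp_eq)

lemma of_nat_nat_to_int_mod_ring: "of_nat (nat (to_int_mod_ring x)) = (x :: 'a::nontriv mod_ring)"
proof -
  have "0 \<le> to_int_mod_ring x"
    using range_to_int_mod_ring[where 'a='a] by (metis atLeastLessThan_iff rangeI)
  then show ?thesis by (simp add: of_nat_of_int_mod_ring)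
qed

lemma of_nat_kval_square:
  assumes "qrl t1 t2"
  shows "(of_nat (kval t1 t2) :: 'p::prime_card mod_ring)^2 = t1 * t2"
proof (cases "t1 = t2")
  case True
  then show ?thesis unfolding kval_def by (simp add: of_nat_nat_to_int_mod_ring power2_eq_square)
next
  case False
  let ?P = "\<lambda>i::nat. i < CARD('p) \<and> (of_nat i :: 'p mod_ring)^2 = t1 * t2"
  obtain t where "t1 * t2 = t^2" using assms False unfolding qrl_def by auto
  moreover obtain i where "i < CARD('p)" "t = of_nat i" using surj_of_nat_mod_ring by blast
  ultimately have "?P i" by simp
  then have "?P (LEAST i. ?P i)" by (rule LeastI)
  then show ?thesis using False unfolding kval_def by simp
qed

lemma ex_mset_eq_3:
  "(\<exists>k1 k2 k3. mset [k1, k2, k3] = mset [u, v, w] \<and> P k1 k2 k3) \<longleftrightarrow>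
    P u v w \<or> P u w v \<or> P v u w \<or> P v w u \<or> P w u v \<or> P w v u"
proof -
  have "mset [k1, k2, k3] = mset [u, v, w] \<longleftrightarrow>
    (k1, k2, k3) \<in> {(u, v, w), (u, w, v), (v, u, w), (v, w, u), (w, u, v), (w, v, u)}" for k1 k2 k3
    by (auto simp: add_eq_conv_ex add_mset_commute)
  then show ?thesis by auto
qed

theorem corollary3p4:
  fixes a b c d e f :: "'p::prime_card mod_ring"
  assumes p_odd: "CARD('p) \<noteq> 2"
    and nz: "a \<noteq> 0" "b \<noteq> 0" "c \<noteq> 0" "d \<noteq> 0" "e \<noteq> 0" "f \<noteq> 0"
    and qr: "qrl a b" "qrl c d" "qrl e f"
  shows "invertible_mat (T_RN 2 2 2 a b c d e f) \<longleftrightarrow>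
    (\<exists>k1 k2 k3. mset [k1, k2, k3] = mset [kval c d, kval a b, kval e f] \<and>
      (let K1 = (of_nat k1 :: 'p mod_ring); K2 = of_nat k2; K3 = of_nat k3 in
        (K1 = K2 \<and> K2 = K3 \<and> CARD('p) \<noteq> 3) \<or>
        (K1 = K2 \<and> K2 \<noteq> K3 \<and> K3 \<noteq> 2 * K1 \<and> K3 \<noteq> - (2 * K1)) \<or>
        (K1 \<noteq> K2 \<and> K1 \<noteq> K3 \<and> K2 \<noteq> K3 \<and>
         K3 \<noteq> K1 + K2 \<and> K3 \<noteq> - (K1 + K2) \<and> K3 \<noteq> K1 - K2 \<and> K3 \<noteq> - (K1 - K2))))"
proof -
  define x y z where "x = (of_nat (kval c d) :: 'p mod_ring)"
    and "y = (of_nat (kval a b) :: 'p mod_ring)" and "z = (of_nat (kval e f) :: 'p mod_ring)"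
  have squares: "c * d = x^2" "a * b = y^2" "e * f = z^2"
    by (simp_all add: x_def y_def z_def of_nat_kval_square qr)
  then have "x \<noteq> 0" "y \<noteq> 0" "z \<noteq> 0" using nz by auto
  note heron = heron_form_squares_ne_0_iff[OF this]
  have "(2::'p mod_ring) \<noteq> 0"
    using of_nat_mod_ring_eq_0_iff_prime[of 2, where 'p='p] p_odd by simp
  note invertible = T_RN_2_2_2_invertible_iff[OF this nz(2,4,5)]
  have char_3: "(3::'p mod_ring) \<noteq> 0 \<longleftrightarrow> CARD('p) \<noteq> 3"
    using of_nat_mod_ring_eq_0_iff_prime[of 3, where 'p='p] by simp
  show ?thesis
    unfolding invertible squares heron ex_mset_eq_3 Let_def admissible_triple_def char_3
    unfolding x_def y_def z_def by (rule refl)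
qed

end
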